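(* For any cluster decomposition $\mathbf z=\sum\mathbf z_i$ and any $i\neq j$, $\mathrm{sep}(\mathbf z_i,\mathbf z_j)>2(r_{|\mathbf z_i|}+r_{|\mathbf z_j|})$.
   Context: $M$ is a smooth Riemannian manifold with distance $\mathrm{dist}$, with $r_{conv}>0$ the infimum of the convexity radius. Configurations lie in $\mathrm{Sym}^n(M)$ (unordered tuples with multiplicity), $|\mathbf z|$ is the number of points, $+$ is union with multiplicity, and $\mathrm{sep}(\mathbf z_1,\mathbf z_2)=\min_{z\in\mathbf z_1,w\in\mathbf z_2}\mathrm{dist}(z,w)$. $\mathbf z$ is pre-confined if $\mathrm{dist}(z_i,z_j)<r_{conv}$ for all $i,j$; then $c(\mathbf z)$ is the unique minimizer of $\sum_i\mathrm{dist}(z_i,z)^2$ on $\bigcap_iB_\rho(z_i)$ for $\max\mathrm{dist}(z_i,z_j)<\rho<r_{conv}$, and $r(\mathbf z)=\max_i\mathrm{dist}(z_i,c(\mathbf z))$. A fixed clustering rule is $0<r_1<\dots<r_N\ll r_{conv}$, $0=d_1<\dots<d_N\ll r_{conv}$ with $r_k>d_k+r_{k-1}$, $d_k>6r_{k-1}$. $\mathbf z$ is confined if pre-confined and $r(\mathbf z)<r_{|\mathbf z|}$; $\mathbf z_1,\mathbf z_2$ are separated if pre-confined with $\mathrm{dist}(c(\mathbf z_1),c(\mathbf z_2))>d_{|\mathbf z_1|+|\mathbf z_2|}$; a cluster decomposition $\mathbf z=\sum\mathbf z_i$ has all parts confined and every pair of distinct parts separated. *)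

theory Defs
  imports "HOL-Analysis.Analysis" "HOL-Library.Multiset"
begin

text \<open>Configurations in Sym^n(M) are multisets; |z| = size z; + is multiset union.
  The ambient space is an arbitrary metric space (the Riemannian distance of M
  makes M a metric space); rconv plays the role of the infimum of the convexity radius.\<close>

definition pre_confined :: "real \<Rightarrow> 'a::metric_space multiset \<Rightarrow> bool" where
  "pre_confined rconv z \<longleftrightarrow> (\<forall>a\<in>#z. \<forall>b\<in>#z. dist a b < rconv)"

definition ball_inter :: "'a::metric_space multiset \<Rightarrow> real \<Rightarrow> 'a set" where
  "ball_inter z \<rho> = {p. \<forall>a\<in>#z. dist a p < \<rho>}"

definition sqdist_sum :: "'a::metric_space multiset \<Rightarrow> 'a \<Rightarrow> real" where
  "sqdist_sum z p = sum_mset (image_mset (\<lambda>a. (dist a p)^2) z)"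

definition center :: "real \<Rightarrow> 'a::metric_space multiset \<Rightarrow> 'a" where
  "center rconv z = (THE p. \<forall>\<rho>. (\<forall>a\<in>#z. \<forall>b\<in>#z. dist a b < \<rho>) \<and> \<rho> < rconv \<longrightarrow>
       p \<in> ball_inter z \<rho> \<and> (\<forall>q\<in>ball_inter z \<rho>. q \<noteq> p \<longrightarrow> sqdist_sum z p < sqdist_sum z q))"

definition radius :: "real \<Rightarrow> 'a::metric_space multiset \<Rightarrow> real" where
  "radius rconv z = Max ((\<lambda>a. dist a (center rconv z)) ` set_mset z)"

definition sep :: "'a::metric_space multiset \<Rightarrow> 'a multiset \<Rightarrow> real" where
  "sep z1 z2 = Min {dist a b | a b. a \<in># z1 \<and> b \<in># z2}"

definition clustering_rule :: "real \<Rightarrow> nat \<Rightarrow> (nat \<Rightarrow> real) \<Rightarrow> (nat \<Rightarrow> real) \<Rightarrow> bool" where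
  "clustering_rule rconv N r d \<longleftrightarrow> 0 < rconv \<and> 1 \<le> N \<and>
     0 < r 1 \<and> d 1 = 0 \<and> r N < rconv \<and> d N < rconv \<and>
     (\<forall>k. 2 \<le> k \<and> k \<le> N \<longrightarrow> r (k-1) < r k \<and> d (k-1) < d k
          \<and> r k > d k + r (k-1) \<and> d k > 6 * r (k-1))"

definition confined :: "real \<Rightarrow> (nat \<Rightarrow> real) \<Rightarrow> 'a::metric_space multiset \<Rightarrow> bool" where
  "confined rconv r z \<longleftrightarrow> pre_confined rconv z \<and> radius rconv z < r (size z)"

definition separated :: "real \<Rightarrow> (nat \<Rightarrow> real) \<Rightarrow> 'a::metric_space multiset \<Rightarrow> 'a multiset \<Rightarrow> bool" where
  "separated rconv d z1 z2 \<longleftrightarrow> pre_confined rconv z1 \<and> pre_confined rconv z2 \<and>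
     dist (center rconv z1) (center rconv z2) > d (size z1 + size z2)"

definition cluster_decomposition ::
  "real \<Rightarrow> (nat \<Rightarrow> real) \<Rightarrow> (nat \<Rightarrow> real) \<Rightarrow> 'a::metric_space multiset \<Rightarrow> 'a multiset list \<Rightarrow> bool" where
  "cluster_decomposition rconv r d z zs \<longleftrightarrow> z = sum_list zs \<and>
     (\<forall>i<length zs. zs!i \<noteq> {#} \<and> confined rconv r (zs!i)) \<and>
     (\<forall>i<length zs. \<forall>j<length zs. i \<noteq> j \<longrightarrow> separated rconv d (zs!i) (zs!j))"

end

theory Submission
  imports Defs
begin

text \<open>Points of a confined part lie within r of its centre, while separated centres are
  more than d n > 6 r (n - 1) apart, where n is the total size of the two parts. Since r is
  increasing, both radii are at most r (n - 1), so the triangle inequality leaves a gap of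
  more than 6 r (n - 1) - r_A - r_B \<ge> 2 (r_A + r_B) between any two points of the parts.\<close>

lemma clustering_rule_r_mono:
  assumes rule: "clustering_rule rconv N r d" and "1 \<le> k" "k \<le> l" "l \<le> N"
  shows "r k \<le> r l"
  using \<open>k \<le> l\<close> \<open>l \<le> N\<close>
proof (induction l rule: dec_induct)
  case (step l)
  have "2 \<le> Suc l" "Suc l \<le> N"
    using \<open>1 \<le> k\<close> step by auto
  then have "r (Suc l - 1) < r (Suc l)"
    using rule unfolding clustering_rule_def by blast
  with step show ?case by simp
qed simp

lemma clustering_rule_d_gt:
  assumes "clustering_rule rconv N r d" "2 \<le> n" "n \<le> N"
  shows "6 * r (n - 1) < d n"
  using assms unfolding clustering_rule_def by auto

lemma dist_center_le_radius:
  assumes "a \<in># z"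
  shows "dist a (center rconv z) \<le> radius rconv z"
  unfolding radius_def using assms by (intro Max_ge) auto

lemma size_nth_add_size_nth_le:
  fixes zs :: "'a multiset list"
  assumes "i < length zs" "j < length zs" "i \<noteq> j"
  shows "size (zs!i) + size (zs!j) \<le> size (sum_list zs)"
proof -
  have "size (sum_list zs) = sum_list (map size zs)"
    by (induction zs) auto
  also have "\<dots> = (\<Sum>k<length zs. size (zs!k))"
    by (simp add: sum_list_sum_nth atLeast0LessThan)
  finally have "size (sum_list zs) = (\<Sum>k<length zs. size (zs!k))" .
  moreover have "(\<Sum>k\<in>{i, j}. size (zs!k)) \<le> (\<Sum>k<length zs. size (zs!k))"
    using assms by (intro sum_mono2) auto
  ultimately show ?thesis using assms(3) by simp
qed

lemma less_sep:
  assumes "A \<noteq> {#}" "B \<noteq> {#}" "\<And>a b. a \<in># A \<Longrightarrow> b \<in># B \<Longrightarrow> t < dist a b"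
  shows "t < sep A B"
proof -
  have S: "{dist a b | a b. a \<in># A \<and> b \<in># B} = (\<lambda>(a, b). dist a b) ` (set_mset A \<times> set_mset B)"
    by auto
  show ?thesis
    unfolding sep_def S using assms by (auto simp: Min_gr_iff)
qed

lemma sep_gt_if_confined_separated:
  assumes rule: "clustering_rule rconv N r d"
    and ne: "A \<noteq> {#}" "B \<noteq> {#}" and size_le: "size A + size B \<le> N"
    and conf: "confined rconv r A" "confined rconv r B"
    and separ: "separated rconv d A B"
  shows "2 * (r (size A) + r (size B)) < sep A B"
proof (rule less_sep[OF ne])
  fix a b assume "a \<in># A" "b \<in># B"
  define n where "n = size A + size B"
  have "1 \<le> size A" "1 \<le> size B"
    using ne by (auto simp: Suc_le_eq nonempty_has_size)
  then have rA: "r (size A) \<le> r (n - 1)" and rB: "r (size B) \<le> r (n - 1)"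
    using clustering_rule_r_mono[OF rule] size_le unfolding n_def by auto
  have d: "6 * r (n - 1) < d n"
    using clustering_rule_d_gt[OF rule] \<open>1 \<le> size A\<close> \<open>1 \<le> size B\<close> size_le unfolding n_def by auto
  have a: "dist a (center rconv A) < r (size A)"
    using dist_center_le_radius[OF \<open>a \<in># A\<close>, of rconv] conf(1) unfolding confined_def by simp
  have b: "dist b (center rconv B) < r (size B)"
    using dist_center_le_radius[OF \<open>b \<in># B\<close>, of rconv] conf(2) unfolding confined_def by simp
  have "d n < dist (center rconv A) (center rconv B)"
    using separ unfolding separated_def n_def by simp
  also have "\<dots> \<le> dist (center rconv A) a + dist a b + dist b (center rconv B)"
    using dist_triangle[of "center rconv A" "center rconv B" a] dist_triangle[of a "center rconv B" b]
    by linarith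
  finally show "2 * (r (size A) + r (size B)) < dist a b"
    using rA rB d a b by (simp add: dist_commute)
qed

theorem lemma2p10:
  fixes rconv :: real and N :: nat and r d :: "nat \<Rightarrow> real"
    and z :: "'a::metric_space multiset" and zs :: "'a multiset list"
  assumes "clustering_rule rconv N r d"
    and "size z \<le> N"
    and "cluster_decomposition rconv r d z zs"
    and "i < length zs" and "j < length zs" and "i \<noteq> j"
  shows "sep (zs!i) (zs!j) > 2 * (r (size (zs!i)) + r (size (zs!j)))"
proof (rule sep_gt_if_confined_separated[OF assms(1)])
  show "zs!i \<noteq> {#}" "zs!j \<noteq> {#}" "confined rconv r (zs!i)" "confined rconv r (zs!j)"
    "separated rconv d (zs!i) (zs!j)"
    using assms(3-6) unfolding cluster_decomposition_def by auto
  show "size (zs!i) + size (zs!j) \<le> N"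
    using size_nth_add_size_nth_le[OF assms(4-6)] assms(2,3)
    unfolding cluster_decomposition_def by simp
qed

end
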